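(* The 2D incompressible Euler equations $$\mathbf{u}_t+\mathbf{u}\cdot\nabla\mathbf{u}=-\nabla p,\qquad\nabla\cdot\mathbf{u}=0$$ subject to periodic boundary conditions on $\mathbb{T}^2$ do not possess the finitely many determining modes property in $H$; that is, there is no positive integer $M$ such that for any two solutions $\mathbf{u}_1,\mathbf{u}_2$ (with initial data in $V^3$), $\lim_{t\to\infty}\|P_M(\mathbf{u}_1(t)-\mathbf{u}_2(t))\|_H=0$ implies $\lim_{t\to\infty}\|\mathbf{u}_1(t)-\mathbf{u}_2(t)\|_H=0$.
   Context: $\mathbb{T}^2=[0,2\pi)^2$. Let $\mathcal{V}$ be the set of $\mathbb{R}^2$-valued $2\pi$-periodic trigonometric polynomials $\varphi$ with $\nabla\cdot\varphi=0$ and $\int_{\mathbb{T}^2}\varphi=0$; $H$ is the closure of $\mathcal{V}$ in $L^2$, $V^s$ its closure in the $H^s$ seminorm. $P_M$ is the projection onto the Fourier modes $\mathbf{n}\in\mathbb{Z}^2\setminus\{(0,0)\}$ with $|\mathbf{n}|\le M$. For data in $V^s$, $s\ge3$, the Euler equations are globally well-posed with unique solutions in $C([0,T];V^s)$ and conserve the $H$ norm. *)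

theory Defs
  imports "HOL-Analysis.Analysis"
begin

text \<open>Spatial points of the torus are represented by points of real^2; fields are
  2pi-periodic functions on real^2. Fourier modes are pairs of integers.\<close>

definition torus_box :: "(real^2) set" where
  "torus_box = cbox 0 (\<chi> i. 2 * pi)"

definition periodic2 :: "(real^2 \<Rightarrow> 'b) \<Rightarrow> bool" where
  "periodic2 v \<longleftrightarrow> (\<forall>x. v (x + (\<chi> i. if i = 1 then 2 * pi else 0)) = v x
                       \<and> v (x + (\<chi> i. if i = 2 then 2 * pi else 0)) = v x)"

definition mode_dot :: "int \<times> int \<Rightarrow> real^2 \<Rightarrow> real" where
  "mode_dot n x = of_int (fst n) * x $ 1 + of_int (snd n) * x $ 2"

definition mode_sq :: "int \<times> int \<Rightarrow> int" where
  "mode_sq n = (fst n)^2 + (snd n)^2"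

text \<open>Fourier coefficient (normalised: v(x) = sum_n fcoef v n e^{i n.x}).\<close>
definition fcoef :: "(real^2 \<Rightarrow> real^2) \<Rightarrow> int \<times> int \<Rightarrow> complex^2" where
  "fcoef v n = (\<chi> j. integral torus_box
       (\<lambda>x. complex_of_real (v x $ j) * cis (- mode_dot n x)) / complex_of_real (4 * pi^2))"

definition normH :: "(real^2 \<Rightarrow> real^2) \<Rightarrow> real" where
  "normH v = sqrt (integral torus_box (\<lambda>x. (norm (v x))^2))"

definition PM :: "nat \<Rightarrow> (real^2 \<Rightarrow> real^2) \<Rightarrow> (real^2 \<Rightarrow> real^2)" where
  "PM M v = (\<lambda>x. \<chi> j. Re (\<Sum>n\<in>{n. 0 < mode_sq n \<and> real_of_int (mode_sq n) \<le> (real M)^2}.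
                          fcoef v n $ j * cis (mode_dot n x)))"

definition H3_weight :: "(real^2 \<Rightarrow> real^2) \<Rightarrow> int \<times> int \<Rightarrow> real" where
  "H3_weight v n = (real_of_int (mode_sq n))^3 * (norm (fcoef v n))^2"

definition normH3 :: "(real^2 \<Rightarrow> real^2) \<Rightarrow> real" where
  "normH3 v = sqrt (infsum (H3_weight v) UNIV)"

text \<open>Membership in V^3: periodic, square-integrable over the cell, zero mean,
  divergence free, finite H^3 seminorm (Fourier characterisation of the closure).\<close>
definition inV3 :: "(real^2 \<Rightarrow> real^2) \<Rightarrow> bool" where
  "inV3 v \<longleftrightarrow> periodic2 v
     \<and> v integrable_on torus_box
     \<and> (\<lambda>x. (norm (v x))^2) integrable_on torus_box
     \<and> fcoef v (0, 0) = 0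
     \<and> (\<forall>n. of_int (fst n) * fcoef v n $ 1 + of_int (snd n) * fcoef v n $ 2 = 0)
     \<and> H3_weight v summable_on UNIV"

text \<open>A (classical) solution of the 2D periodic incompressible Euler equations on
  [0,\<infinity>) lying in C([0,\<infinity>); V^3).  u t x is the velocity at time t and point x.\<close>
definition euler_solution :: "(real \<Rightarrow> real^2 \<Rightarrow> real^2) \<Rightarrow> bool" where
  "euler_solution u \<longleftrightarrow>
     (\<forall>t\<ge>0. inV3 (u t))
   \<and> (\<forall>t\<ge>0. ((\<lambda>s. normH3 (\<lambda>x. u s x - u t x)) \<longlongrightarrow> 0) (at t within {0..}))
   \<and> (\<exists>p :: real \<Rightarrow> real^2 \<Rightarrow> real.
        (\<forall>t\<ge>0. periodic2 (p t)) \<and>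
        (\<forall>t\<ge>0. \<forall>x. \<exists>Du Dp ut.
            (u t has_derivative Du) (at x)
          \<and> (p t has_derivative Dp) (at x)
          \<and> ((\<lambda>s. u s x) has_vector_derivative ut) (at t within {0..})
          \<and> (\<Sum>i\<in>UNIV. Du (axis i 1) $ i) = 0
          \<and> ut + Du (u t x) = - (\<chi> i. Dp (axis i 1))))"

end

theory Submission
  imports Defs
begin

text \<open>The shear flows \<open>u\<^sub>k(x) = (sin (k x\<^sub>2), 0)\<close> are steady solutions with zero pressure:
  \<open>u\<^sub>k\<close> depends only on \<open>x\<^sub>2\<close> and points in direction \<open>x\<^sub>1\<close>, so \<open>u\<^sub>k \<cdot> \<nabla>u\<^sub>k = 0\<close>.
  Their Fourier coefficients vanish off the modes \<open>(0, \<plusminus>k)\<close>, so for \<open>k > M\<close> the difference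
  between \<open>u\<^sub>k\<close> and the zero solution is invisible to \<open>P\<^sub>M\<close>, although its \<open>H\<close> norm is a
  positive constant.\<close>

lemma has_integral_vec2_pair:
  fixes f :: "real \<times> real \<Rightarrow> 'a::banach"
  assumes "(f has_integral I) (cbox (u$1, u$2) (v$1, v$2))"
  shows "((\<lambda>x::real^2. f (x$1, x$2)) has_integral I) (cbox u v)"
proof -
  define g where "g x = (x$1, x$2)" for x :: "real^2"
  define h where "h p = ((\<chi> i. if i = 1 then fst p else snd p) :: real^2)" for p :: "real \<times> real"
  have hg: "h (g x) = x" for x
    by (simp add: h_def g_def vec_eq_iff forall_2)
  have gh: "g (h p) = p" for p
    by (simp add: h_def g_def)
  have mem_g: "g x \<in> cbox (g a) (g b) \<longleftrightarrow> x \<in> cbox a b" for x a b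
    by (simp add: g_def mem_box_cart forall_2)
  have g_image: "g ` cbox a b = cbox (g a) (g b)" for a b
    using mem_g by (auto simp: image_iff) (metis gh mem_g)
  have h_image: "h ` cbox p q = cbox (h p) (h q)" for p q
  proof -
    have "h ` cbox p q = h ` g ` cbox (h p) (h q)"
      by (simp add: g_image gh)
    then show ?thesis
      by (simp add: image_image hg)
  qed
  have content_g: "measure lborel (g ` cbox a b) = 1 * measure lborel (cbox a b)" for a b
  proof (cases "cbox a b = {}")
    case False
    then have "a$i \<le> b$i" for i by (simp add: interval_ne_empty_cart)
    with False show ?thesis
      unfolding g_image by (simp add: g_def content_Pair content_cbox_cart UNIV_2)
  qed (simp add: g_image)
  have cont_g: "continuous (at x) g" for x
    unfolding g_def by (intro continuous_intros)
  have "(f has_integral I) (cbox (g u) (g v))"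
    using assms by (simp add: g_def)
  then have "((\<lambda>x. f (g x)) has_integral (1/1) *\<^sub>R I) (h ` cbox (g u) (g v))"
    by (intro has_integral_twiddle[OF zero_less_one hg gh cont_g _ _ content_g])
       (use g_image h_image in blast)+
  then show ?thesis
    unfolding h_image hg by (simp add: g_def)
qed

lemma has_integral_separable:
  fixes A B :: "real \<Rightarrow> 'a::{banach, real_normed_field}"
  assumes "continuous_on {a..b} A" and "continuous_on {c..d} B"
  shows "((\<lambda>p. A (fst p) * B (snd p)) has_integral (integral {a..b} A * integral {c..d} B))
           (cbox (a, c) (b, d))"
proof -
  have cont: "continuous_on (cbox (a, c) (b, d)) (\<lambda>p. A (fst p) * B (snd p))"
    by (intro continuous_on_mult continuous_on_compose2[OF assms(1)] continuous_on_compose2[OF assms(2)]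
        continuous_intros) (auto simp: cbox_Pair_eq)
  have "integral (cbox (a, c) (b, d)) (\<lambda>p. A (fst p) * B (snd p))
          = integral {a..b} (\<lambda>s. integral {c..d} (\<lambda>t. A s * B t))" (is "?I = _")
    using integral_prod_continuous[OF cont] by simp
  also have "\<dots> = integral {a..b} (\<lambda>s. A s * integral {c..d} B)"
    by simp
  also have "\<dots> = integral {a..b} A * integral {c..d} B"
    by simp
  finally have "?I = integral {a..b} A * integral {c..d} B" .
  moreover have "((\<lambda>p. A (fst p) * B (snd p)) has_integral ?I) (cbox (a, c) (b, d))"
    by (rule integrable_integral[OF integrable_continuous[OF cont]])
  ultimately show ?thesis
    by (simp only:)
qed

lemma has_integral_cis_int:
  fixes m :: int
  shows "((\<lambda>t. cis (of_int m * t)) has_integral (if m = 0 then 2 * pi else 0)) {0..2 * pi}"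
proof (cases "m = 0")
  case True
  then show ?thesis
    using has_integral_const_real[of "1::complex" 0 "2 * pi"] by (simp add: scaleR_conv_of_real)
next
  case False
  define F where "F t = cis (of_int m * t) / (\<i> * of_int m)" for t
  have "(F has_vector_derivative cis (of_int m * t)) (at t within {0..2 * pi})" for t
    unfolding F_def has_vector_derivative_def
    by (rule derivative_eq_intros refl | simp)+
       (use False in \<open>auto simp: fun_eq_iff field_simps scaleR_conv_of_real\<close>)
  then have "((\<lambda>t. cis (of_int m * t)) has_integral (F (2 * pi) - F 0)) {0..2 * pi}"
    by (intro fundamental_theorem_of_calculus) auto
  moreover have "cis (of_int m * (2 * pi)) = 1"
    using cos_int_2pin[of m] sin_int_2pin[of m] by (simp add: complex_eq_iff mult.commute)
  ultimately show ?thesis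
    using False by (simp add: F_def)
qed

lemma has_integral_sin_cis:
  fixes k m :: int
  shows "((\<lambda>t. complex_of_real (sin (of_int k * t)) * cis (of_int m * t)) has_integral
           ((if m + k = 0 then 2 * pi else 0) - (if m - k = 0 then 2 * pi else 0)) / (2 * \<i>))
         {0..2 * pi}"
proof -
  have "cis (of_int (m + k) * t) - cis (of_int (m - k) * t)
          = 2 * \<i> * (complex_of_real (sin (of_int k * t)) * cis (of_int m * t))" for t
    by (simp add: complex_eq_iff algebra_simps sin_add sin_diff cos_add cos_diff)
  then have "complex_of_real (sin (of_int k * t)) * cis (of_int m * t)
          = (cis (of_int (m + k) * t) - cis (of_int (m - k) * t)) / (2 * \<i>)" for t
    by simp
  then have "(\<lambda>t. complex_of_real (sin (of_int k * t)) * cis (of_int m * t))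
          = (\<lambda>t. (cis (of_int (m + k) * t) - cis (of_int (m - k) * t)) / (2 * \<i>))"
    by (intro ext)
  then show ?thesis
    using has_integral_divide[OF has_integral_diff[OF has_integral_cis_int[of "m + k"]
          has_integral_cis_int[of "m - k"]], of "2 * \<i>"]
    by simp
qed

definition shear_flow :: "int \<Rightarrow> real^2 \<Rightarrow> real^2" where
  "shear_flow k x = sin (of_int k * x$2) *\<^sub>R axis 1 1"

lemma shear_flow_nth [simp]:
  "shear_flow k x $ 1 = sin (of_int k * x$2)"
  "shear_flow k x $ 2 = 0"
  by (simp_all add: shear_flow_def axis_def)

lemma continuous_on_shear_flow: "continuous_on S (shear_flow k)"
  unfolding shear_flow_def by (intro continuous_intros)

lemma fcoef_shear_flow_eq_0:
  assumes "n \<notin> {(0, k), (0, - k)}"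
  shows "fcoef (shear_flow k) n = 0"
proof -
  obtain n1 n2 where n: "n = (n1, n2)"
    by fastforce
  define A where "A s = cis (of_int (- n1) * s)" for s
  define B where "B t = complex_of_real (sin (of_int k * t)) * cis (of_int (- n2) * t)" for t
  have "continuous_on {0..2 * pi} A" "continuous_on {0..2 * pi} B"
    unfolding A_def B_def by (intro continuous_intros)+
  from has_integral_separable[OF this]
  have "((\<lambda>p. A (fst p) * B (snd p)) has_integral integral {0..2 * pi} A * integral {0..2 * pi} B)
          (cbox (0, 0) (2 * pi, 2 * pi))" .
  moreover have "integral {0..2 * pi} A = 0" if "n1 \<noteq> 0"
    unfolding A_def[abs_def] using has_integral_cis_int[of "- n1"] that
    by (simp add: integral_unique)
  moreover have "integral {0..2 * pi} B = 0" if "n1 = 0"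
    unfolding B_def[abs_def] using has_integral_sin_cis[of k "- n2"] assms that
    by (auto simp: integral_unique n)
  ultimately have "((\<lambda>p. A (fst p) * B (snd p)) has_integral 0) (cbox (0, 0) (2 * pi, 2 * pi))"
    by (cases "n1 = 0") simp_all
  then have "((\<lambda>x::real^2. A (x$1) * B (x$2)) has_integral 0) torus_box"
    unfolding torus_box_def
    using has_integral_vec2_pair[of "\<lambda>p. A (fst p) * B (snd p)" 0 0 "\<chi> i. 2 * pi"] by simp
  moreover have "complex_of_real (sin (of_int k * x$2)) * cis (- mode_dot n x) = A (x$1) * B (x$2)"
    for x :: "real^2"
    by (simp add: A_def B_def n mode_dot_def cis_mult algebra_simps)
  ultimately show ?thesis
    by (simp add: fcoef_def vec_eq_iff forall_2 integral_unique)
qed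

lemma fcoef_zero [simp]: "fcoef (\<lambda>x. 0) n = 0"
  by (simp add: fcoef_def vec_eq_iff)

lemma H3_weight_zero [simp]: "H3_weight (\<lambda>x. 0) = (\<lambda>n. 0)"
  by (simp add: fun_eq_iff H3_weight_def)

lemma inV3_shear_flow: "inV3 (shear_flow k)"
  unfolding inV3_def
proof (intro conjI allI)
  have "sin (of_int k * (y + 2 * pi)) = sin (of_int k * y)" for y
  proof -
    have "of_int k * (y + 2 * pi) = of_int k * y + 2 * pi * of_int k"
      by (simp add: algebra_simps)
    then show ?thesis
      by (simp add: sin_add)
  qed
  then show "periodic2 (shear_flow k)"
    by (simp add: periodic2_def shear_flow_def)
  show "shear_flow k integrable_on torus_box"
    unfolding torus_box_def by (intro integrable_continuous continuous_on_shear_flow)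
  show "(\<lambda>x. (norm (shear_flow k x))^2) integrable_on torus_box"
    unfolding torus_box_def by (intro integrable_continuous continuous_intros continuous_on_shear_flow)
  show "fcoef (shear_flow k) (0, 0) = 0"
  proof (cases "k = 0")
    case True
    then show ?thesis
      by (simp add: fcoef_def shear_flow_def vec_eq_iff)
  qed (simp add: fcoef_shear_flow_eq_0)
  have fcoef_nth2: "fcoef (shear_flow k) n $ 2 = 0" for n
    by (simp add: fcoef_def)
  fix n :: "int \<times> int"
  show "of_int (fst n) * fcoef (shear_flow k) n $ 1 + of_int (snd n) * fcoef (shear_flow k) n $ 2 = 0"
  proof (cases "fst n = 0")
    case False
    then have "n \<notin> {(0, k), (0, - k)}"
      by auto
    then show ?thesis
      by (simp add: fcoef_shear_flow_eq_0)
  qed (simp add: fcoef_nth2)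
next
  have "H3_weight (shear_flow k) n = 0" if "n \<notin> {(0, k), (0, - k)}" for n
    using that by (simp add: H3_weight_def fcoef_shear_flow_eq_0)
  then show "H3_weight (shear_flow k) summable_on UNIV"
    using summable_on_cong_neutral[of "{(0, k), (0, - k)}" UNIV "H3_weight (shear_flow k)"]
    by auto
qed

lemma euler_solution_stationary:
  assumes "inV3 w"
    and "\<And>x. \<exists>Du. (w has_derivative Du) (at x) \<and> (\<Sum>i\<in>UNIV. Du (axis i 1) $ i) = 0 \<and> Du (w x) = 0"
  shows "euler_solution (\<lambda>t. w)"
proof -
  have "\<exists>Du Dp ut. (w has_derivative Du) (at x) \<and> ((\<lambda>x. 0::real) has_derivative Dp) (at x)
          \<and> ((\<lambda>s. w x) has_vector_derivative ut) (at t within {0..})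
          \<and> (\<Sum>i\<in>UNIV. Du (axis i 1) $ i) = 0 \<and> ut + Du (w x) = - (\<chi> i. Dp (axis i 1))" for t x
  proof -
    obtain Du where "(w has_derivative Du) (at x)" "(\<Sum>i\<in>UNIV. Du (axis i 1) $ i) = 0" "Du (w x) = 0"
      using assms(2) by blast
    then show ?thesis
      by (intro exI[of _ Du] exI[of _ "\<lambda>h. 0"] exI[of _ 0])
         (simp add: vec_eq_iff)
  qed
  moreover have "normH3 (\<lambda>x. 0) = 0"
    by (simp add: normH3_def)
  ultimately show ?thesis
    using assms(1) unfolding euler_solution_def
    by (intro conjI exI[of _ "\<lambda>t x. 0"]) (simp_all add: periodic2_def)
qed

lemma euler_solution_zero: "euler_solution (\<lambda>t x. 0)"
proof (rule euler_solution_stationary)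
  show "inV3 (\<lambda>x. 0)"
    by (simp add: inV3_def periodic2_def integrable_0)
qed (auto intro: exI[of _ "\<lambda>h. 0"])

lemma euler_solution_shear_flow: "euler_solution (\<lambda>t. shear_flow k)"
proof (rule euler_solution_stationary[OF inV3_shear_flow])
  fix x :: "real^2"
  define Du where "Du h = ((cos (of_int k * x$2) * (of_int k * h$2)) *\<^sub>R axis 1 (1::real) :: real^2)"
    for h :: "real^2"
  have "(shear_flow k has_derivative Du) (at x)"
    unfolding shear_flow_def[abs_def] Du_def
    by (rule derivative_eq_intros bounded_linear_imp_has_derivative[OF bounded_linear_vec_nth] refl)+
       (simp add: fun_eq_iff)
  moreover have "(\<Sum>i\<in>UNIV. Du (axis i 1) $ i) = 0" "Du (shear_flow k x) = 0"
    by (simp_all add: sum_2 Du_def axis_def)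
  ultimately show "\<exists>Du. (shear_flow k has_derivative Du) (at x)
      \<and> (\<Sum>i\<in>UNIV. Du (axis i 1) $ i) = 0 \<and> Du (shear_flow k x) = 0"
    by blast
qed

lemma PM_eq_0:
  assumes "\<And>n. 0 < mode_sq n \<Longrightarrow> real_of_int (mode_sq n) \<le> (real M)^2 \<Longrightarrow> fcoef v n = 0"
  shows "PM M v = (\<lambda>x. 0)"
proof
  fix x
  have "(\<Sum>n\<in>{n. 0 < mode_sq n \<and> real_of_int (mode_sq n) \<le> (real M)^2}.
          fcoef v n $ j * cis (mode_dot n x)) = 0" for j
    by (rule sum.neutral) (simp add: assms)
  then have "PM M v x = (\<chi> j. Re 0)"
    unfolding PM_def by (simp only:)
  then show "PM M v x = 0"
    by (simp add: vec_eq_iff)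
qed

lemma PM_shear_flow:
  assumes "int M < \<bar>k\<bar>"
  shows "PM M (shear_flow k) = (\<lambda>x. 0)"
proof (rule PM_eq_0)
  fix n :: "int \<times> int"
  assume low: "real_of_int (mode_sq n) \<le> (real M)^2"
  have "(int M)^2 < \<bar>k\<bar>^2"
    using assms by (intro power_strict_mono) auto
  moreover have "mode_sq n \<le> (int M)^2"
    using low by (metis of_int_le_iff of_int_of_nat_eq of_int_power)
  ultimately have "mode_sq n < k^2"
    by simp
  then have "n \<notin> {(0, k), (0, - k)}"
    by (auto simp: mode_sq_def)
  then show "fcoef (shear_flow k) n = 0"
    by (rule fcoef_shear_flow_eq_0)
qed

lemma normH_eq_0_imp_vanishes:
  assumes "continuous_on torus_box v" "normH v = 0" "x \<in> torus_box"
  shows "v x = 0"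
proof -
  let ?f = "\<lambda>x. (norm (v x))^2"
  have cont: "continuous_on torus_box ?f"
    using assms(1) by (intro continuous_intros)
  have "integral torus_box ?f = 0"
    using assms(2) by (simp add: normH_def)
  moreover have "(?f has_integral integral torus_box ?f) torus_box"
    using cont unfolding torus_box_def by (intro integrable_integral integrable_continuous)
  ultimately have "(?f has_integral 0) (cbox 0 (\<chi> i. 2 * pi))"
    by (simp add: torus_box_def)
  moreover have "box 0 (\<chi> i. 2 * pi :: real^2) \<noteq> {}"
    using pi_gt_zero by (simp add: interval_ne_empty_cart)
  ultimately show ?thesis
    using has_integral_0_cbox_imp_0[of 0 "\<chi> i. 2 * pi" ?f x] cont assms(3)
    by (simp add: torus_box_def)
qed

lemma normH_shear_flow_neq_0:
  assumes "0 < k"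
  shows "normH (shear_flow k) \<noteq> 0"
proof
  define x0 :: "real^2" where "x0 = (\<chi> i. if i = 1 then 0 else pi / (2 * of_int k))"
  have "pi / (2 * of_int k) \<le> pi / 2"
    using assms by (intro divide_left_mono) auto
  then have "pi / (2 * of_int k) \<le> 2 * pi"
    using pi_gt_zero by linarith
  then have "x0 \<in> torus_box"
    using assms pi_gt_zero by (auto simp: x0_def torus_box_def mem_box_cart)
  moreover assume "normH (shear_flow k) = 0"
  ultimately have vanishes: "shear_flow k x0 = 0"
    by (intro normH_eq_0_imp_vanishes continuous_on_shear_flow)
  have "shear_flow k x0 $ 1 = 1"
    using assms by (simp add: x0_def)
  with vanishes show False
    by simp
qed

lemma low_modes_not_determining:
  "\<exists>u1 u2. euler_solution u1 \<and> euler_solution u2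
     \<and> ((\<lambda>t. normH (PM M (\<lambda>x. u1 t x - u2 t x))) \<longlongrightarrow> 0) at_top
     \<and> \<not> ((\<lambda>t. normH (\<lambda>x. u1 t x - u2 t x)) \<longlongrightarrow> 0) at_top"
proof -
  define k where "k = int M + 1"
  have "PM M (shear_flow k) = (\<lambda>x. 0)"
    by (rule PM_shear_flow) (simp add: k_def)
  then have low: "((\<lambda>t::real. normH (PM M (\<lambda>x. shear_flow k x - 0))) \<longlongrightarrow> 0) at_top"
    by (simp add: normH_def)
  have "normH (shear_flow k) \<noteq> 0"
    by (rule normH_shear_flow_neq_0) (simp add: k_def)
  then have high: "\<not> ((\<lambda>t::real. normH (\<lambda>x. shear_flow k x - 0)) \<longlongrightarrow> 0) at_top"
    by (simp add: tendsto_const_iff)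
  show ?thesis
    using euler_solution_shear_flow euler_solution_zero low high
    by (intro exI[of _ "\<lambda>t. shear_flow k"] exI[of _ "\<lambda>t x. 0"]) simp
qed

theorem theorem4p4:
  shows "\<not> (\<exists>M::nat. M > 0 \<and>
           (\<forall>u1 u2. euler_solution u1 \<and> euler_solution u2 \<and>
              ((\<lambda>t. normH (PM M (\<lambda>x. u1 t x - u2 t x))) \<longlongrightarrow> 0) at_top
              \<longrightarrow> ((\<lambda>t. normH (\<lambda>x. u1 t x - u2 t x)) \<longlongrightarrow> 0) at_top))"
  using low_modes_not_determining by blast

end
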